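(* Fix $m\in\mathbb{R}$ and $[\ell',r']\subset(\ell,r)$. Let $(h_i)_{i\geq1}$ be continuous concave functions on $[\ell,r]$ converging uniformly on $[\ell,r]$ to a continuous concave function $h_0$. Then $\liminf_{i\to\infty}\mathbf{l}(h_i)\geq\mathbf{l}(h_0)$ and $\limsup_{i\to\infty}\mathbf{r}(h_i)\leq\mathbf{r}(h_0)$.
   Context: For a continuous concave $h$ on $[\ell,r]$ with one-sided derivatives $h'_\pm(x)=\lim_{y\to x^\pm}\frac{h(y)-h(x)}{y-x}$: $\mathbf{l}(h)=\inf\{x\in[\ell',r']: h'_+(x)\leq m\}$ if this set is non-empty and $\mathbf{l}(h)=r'$ otherwise; $\mathbf{r}(h)=\sup\{x\in[\ell',r']: h'_-(x)\geq m\}$ if this set is non-empty and $\mathbf{r}(h)=\ell'$ otherwise. *)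

theory Defs
  imports "HOL-Analysis.Analysis"
begin

definition rderiv :: "(real \<Rightarrow> real) \<Rightarrow> real \<Rightarrow> real" where
  "rderiv h x = Lim (at_right x) (\<lambda>y. (h y - h x) / (y - x))"

definition lderiv :: "(real \<Rightarrow> real) \<Rightarrow> real \<Rightarrow> real" where
  "lderiv h x = Lim (at_left x) (\<lambda>y. (h y - h x) / (y - x))"

definition lpt :: "real \<Rightarrow> real \<Rightarrow> real \<Rightarrow> (real \<Rightarrow> real) \<Rightarrow> real" where
  "lpt m l' r' h = (if {x \<in> {l'..r'}. rderiv h x \<le> m} \<noteq> {}
                     then Inf {x \<in> {l'..r'}. rderiv h x \<le> m} else r')"

definition rpt :: "real \<Rightarrow> real \<Rightarrow> real \<Rightarrow> (real \<Rightarrow> real) \<Rightarrow> real" where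
  "rpt m l' r' h = (if {x \<in> {l'..r'}. lderiv h x \<ge> m} \<noteq> {}
                     then Sup {x \<in> {l'..r'}. lderiv h x \<ge> m} else l')"

end

theory Submission
  imports Defs
begin

text \<open>Concavity makes the chord slope (h y - h x) / (y - x) nonincreasing in both endpoints,
  so at interior points the one-sided derivatives exist as monotone limits of chord slopes.
  If x < lpt h0 then h0'+(x) > m, so some chord slope of h0 starting at x exceeds m; by
  pointwise convergence the same chord slope of h_i exceeds m for large i, and by monotonicity
  h_i'+(z) > m for every z in [l', x], whence lpt h_i \<ge> x.  The reflection x \<mapsto> -x
  exchanges left and right derivatives and turns rpt into -lpt, which gives the second
  inequality.\<close>

lemma concave_on_slope_le:
  fixes f :: "real \<Rightarrow> real"
  assumes f: "concave_on I f" and I: "x \<in> I" "z \<in> I" and xyz: "x < y" "y < z"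
  shows "(f z - f x) / (z - x) \<le> (f y - f x) / (y - x)"
    and "(f z - f y) / (z - y) \<le> (f z - f x) / (z - x)"
proof -
  have "convex_on I (\<lambda>x. - f x)"
    using f by (simp add: concave_on_def)
  note slopes = convex_on_slope_le[OF this I xyz]
  have "(- f x - - f z) / (x - z) = - ((f z - f x) / (z - x))"
    and "(- f x - - f y) / (x - y) = - ((f y - f x) / (y - x))"
    and "(- f y - - f z) / (y - z) = - ((f z - f y) / (z - y))"
    using xyz by (simp_all add: field_simps)
  with slopes show "(f z - f x) / (z - x) \<le> (f y - f x) / (y - x)"
    and "(f z - f y) / (z - y) \<le> (f z - f x) / (z - x)"
    by simp_all
qed

lemma concave_on_slope_antimono:
  fixes f :: "real \<Rightarrow> real"
  assumes f: "concave_on {l..r} f"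
    and "l \<le> a" "a < b" "c < d" "a \<le> c" "b \<le> d" "d \<le> r"
  shows "(f d - f c) / (d - c) \<le> (f b - f a) / (b - a)"
proof -
  have "(f d - f a) / (d - a) \<le> (f b - f a) / (b - a)"
    using concave_on_slope_le(1)[OF f, of a d b] assms by (cases "b < d") auto
  moreover have "(f d - f c) / (d - c) \<le> (f d - f a) / (d - a)"
    using concave_on_slope_le(2)[OF f, of a d c] assms by (cases "a < c") auto
  ultimately show ?thesis
    by linarith
qed

lemma concave_on_reflect:
  fixes f :: "'a::real_vector \<Rightarrow> real"
  assumes "concave_on S f"
  shows "concave_on (uminus ` S) (\<lambda>x. f (- x))"
  using assms unfolding concave_on_iff
  by (auto simp: convex_negations add.commute)

lemma concave_on_tendsto_rderiv:
  fixes f :: "real \<Rightarrow> real"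
  assumes f: "concave_on {l..r} f" and x: "l < x" "x < r"
  shows "((\<lambda>y. (f y - f x) / (y - x)) \<longlongrightarrow> rderiv f x) (at_right x)"
proof -
  define g where "g y = - ((f y - f x) / (y - x))" for y
  have "(g \<longlongrightarrow> Inf (g ` ({x<..} \<inter> {x<..r}))) (at x within ({x<..} \<inter> {x<..r}))"
  proof (rule Lim_right_bound)
    fix a b assume "a \<in> {x<..r}" "b \<in> {x<..r}" "a \<le> b"
    then show "g a \<le> g b"
      unfolding g_def using concave_on_slope_antimono[OF f, of x a x b] x by auto
  next
    fix a assume "a \<in> {x<..r}"
    then show "- ((f x - f l) / (x - l)) \<le> g a"
      unfolding g_def using concave_on_slope_antimono[OF f, of l x x a] x by auto
  qed
  moreover have "at x within ({x<..} \<inter> {x<..r}) = at_right x"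
    using x by (intro at_within_nhd[of x "{..<r}"]) auto
  ultimately have "((\<lambda>y. - g y) \<longlongrightarrow> - Inf (g ` ({x<..} \<inter> {x<..r}))) (at_right x)"
    by (auto intro: tendsto_minus)
  then show ?thesis
    unfolding g_def rderiv_def by (simp add: tendsto_Lim)
qed

lemma concave_on_slope_le_rderiv:
  fixes f :: "real \<Rightarrow> real"
  assumes f: "concave_on {l..r} f" and "l < x" "x < y" "y \<le> r"
  shows "(f y - f x) / (y - x) \<le> rderiv f x"
proof (rule tendsto_lowerbound[OF concave_on_tendsto_rderiv[OF f]])
  show "\<forall>\<^sub>F z in at_right x. (f y - f x) / (y - x) \<le> (f z - f x) / (z - x)"
    using assms unfolding eventually_at_right[OF \<open>x < y\<close>]
    by (auto intro!: exI[of _ y] concave_on_slope_antimono[OF f])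
qed (use assms in auto)

lemma rderiv_gt_imp_slope_gt:
  fixes f :: "real \<Rightarrow> real"
  assumes f: "concave_on {l..r} f" and x: "l < x" "x < r" and m: "m < rderiv f x"
  obtains y where "x < y" "y \<le> r" "m < (f y - f x) / (y - x)"
proof -
  have "\<forall>\<^sub>F y in at_right x. m < (f y - f x) / (y - x)"
    using order_tendstoD(1)[OF concave_on_tendsto_rderiv[OF f x] m] .
  moreover have "\<forall>\<^sub>F y in at_right x. y < r"
    unfolding eventually_at_right[OF \<open>x < r\<close>] using \<open>x < r\<close> by blast
  moreover note eventually_at_right_less[of x]
  ultimately have "\<forall>\<^sub>F y in at_right x. x < y \<and> y < r \<and> m < (f y - f x) / (y - x)"
    by eventually_elim auto
  with that show ?thesis
    using eventually_happens by fastforce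
qed

lemma lderiv_eq_minus_rderiv_reflect:
  fixes f :: "real \<Rightarrow> real"
  assumes f: "concave_on {l..r} f" and x: "l < x" "x < r"
  shows "lderiv f x = - rderiv (\<lambda>y. f (- y)) (- x)"
proof -
  let ?R = "rderiv (\<lambda>y. f (- y)) (- x)"
  have "concave_on {-r..-l} (\<lambda>y. f (- y))"
    using concave_on_reflect[OF f] by simp
  from concave_on_tendsto_rderiv[OF this, of "- x"]
  have "((\<lambda>y. (f (- y) - f x) / (y + x)) \<longlongrightarrow> ?R) (at_right (- x))"
    using x by simp
  then have "((\<lambda>y. (f (- y) - f x) / (- y - x)) \<longlongrightarrow> - ?R) (at_right (- x))"
    by (auto dest: tendsto_minus simp: minus_divide_right add.commute)
  then have "((\<lambda>y. (f y - f x) / (y - x)) \<longlongrightarrow> - ?R) (at_left x)"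
    by (simp add: filterlim_at_left_to_right)
  then show ?thesis
    unfolding lderiv_def by (simp add: tendsto_Lim)
qed

lemma lpt_le:
  assumes "x \<in> {l'..r'}" "rderiv f x \<le> m"
  shows "lpt m l' r' f \<le> x"
proof -
  have "bdd_below {x \<in> {l'..r'}. rderiv f x \<le> m}"
    by (rule bdd_belowI[of _ l']) auto
  then show ?thesis
    using assms unfolding lpt_def by (auto intro: cInf_lower)
qed

lemma lpt_le_right: "lpt m l' r' f \<le> r'"
proof (cases "{x \<in> {l'..r'}. rderiv f x \<le> m} = {}")
  case False
  then obtain z where "z \<in> {l'..r'}" "rderiv f z \<le> m"
    by blast
  then show ?thesis
    using lpt_le[of z l' r' f m] by simp
qed (simp add: lpt_def)

lemma le_lpt:
  assumes "x \<le> r'" and "\<And>z. z \<in> {l'..<x} \<Longrightarrow> m < rderiv f z"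
  shows "x \<le> lpt m l' r' f"
proof -
  have "x \<le> z" if "z \<in> {l'..r'}" "rderiv f z \<le> m" for z
    using assms(2)[of z] that by force
  then show ?thesis
    using assms(1) unfolding lpt_def by (auto intro: cInf_greatest)
qed

lemma rpt_eq_minus_lpt_reflect:
  fixes f :: "real \<Rightarrow> real"
  assumes f: "concave_on {l..r} f" and "l < l'" "r' < r"
  shows "rpt m l' r' f = - lpt (- m) (- r') (- l') (\<lambda>y. f (- y))"
proof -
  have "rderiv (\<lambda>y. f (- y)) y = - lderiv f (- y)" if "- y \<in> {l'..r'}" for y
    using lderiv_eq_minus_rderiv_reflect[OF f, of "- y"] that assms by auto
  then have "{y \<in> {- r'..- l'}. rderiv (\<lambda>y. f (- y)) y \<le> - m}
      = uminus ` {x \<in> {l'..r'}. m \<le> lderiv f x}"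
    by (auto simp: image_iff) (metis minus_minus neg_le_iff_le)
  then show ?thesis
    unfolding lpt_def rpt_def by (auto simp: Inf_real_def image_image)
qed

lemma eventually_le_lpt:
  fixes h :: "'i \<Rightarrow> real \<Rightarrow> real"
  assumes "l < l'" "l' \<le> r'" "r' < r"
    and conc: "\<And>i. concave_on {l..r} (h i)" and conc0: "concave_on {l..r} h0"
    and lim: "\<And>x. x \<in> {l..r} \<Longrightarrow> ((\<lambda>i. h i x) \<longlongrightarrow> h0 x) F"
    and x: "x < lpt m l' r' h0"
  shows "\<forall>\<^sub>F i in F. x \<le> lpt m l' r' (h i)"
proof (cases "x < l'")
  case True
  have "l' \<le> lpt m l' r' (h i)" for i
    by (rule le_lpt) (use \<open>l' \<le> r'\<close> in auto)
  with True show ?thesis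
    by (intro always_eventually allI) (meson less_imp_le order.strict_trans2)
next
  case False
  have "x < r'"
    using x lpt_le_right[of m l' r' h0] by linarith
  have "m < rderiv h0 x"
  proof (rule ccontr)
    assume "\<not> m < rderiv h0 x"
    then have "lpt m l' r' h0 \<le> x"
      using False \<open>x < r'\<close> by (intro lpt_le) auto
    with x show False
      by simp
  qed
  moreover have "l < x" "x < r"
    using False \<open>x < r'\<close> assms(1,3) by auto
  ultimately obtain y where y: "x < y" "y \<le> r" "m < (h0 y - h0 x) / (y - x)"
    using rderiv_gt_imp_slope_gt[OF conc0] by blast
  have "((\<lambda>i. (h i y - h i x) / (y - x)) \<longlongrightarrow> (h0 y - h0 x) / (y - x)) F"
    using \<open>l < x\<close> \<open>x < r\<close> y by (intro tendsto_intros lim) auto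
  from order_tendstoD(1)[OF this y(3)]
  show ?thesis
  proof eventually_elim
    case (elim i)
    show "x \<le> lpt m l' r' (h i)"
    proof (rule le_lpt)
      fix z assume z: "z \<in> {l'..<x}"
      note elim
      also have "(h i y - h i x) / (y - x) \<le> (h i y - h i z) / (y - z)"
        using z y assms(1) by (intro concave_on_slope_antimono[OF conc]) auto
      also have "\<dots> \<le> rderiv (h i) z"
        using z y assms(1) by (intro concave_on_slope_le_rderiv[OF conc]) auto
      finally show "m < rderiv (h i) z" .
    qed (use \<open>x < r'\<close> in simp)
  qed
qed

lemma Liminf_ereal_ge:
  fixes f :: "'i \<Rightarrow> real"
  assumes "\<And>x. x < a \<Longrightarrow> \<forall>\<^sub>F i in F. x \<le> f i"
  shows "ereal a \<le> Liminf F (\<lambda>i. ereal (f i))"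
  unfolding le_Liminf_iff
proof (intro allI impI)
  fix y assume "y < ereal a"
  then obtain x where x: "y < ereal x" "x < a"
    using ereal_dense2 by force
  from assms[OF x(2)] show "\<forall>\<^sub>F i in F. y < ereal (f i)"
    by eventually_elim (metis x(1) ereal_less_eq(3) order.strict_trans2)
qed

lemma Liminf_lpt_ge:
  fixes h :: "'i \<Rightarrow> real \<Rightarrow> real"
  assumes "l < l'" "l' \<le> r'" "r' < r"
    and "\<And>i. concave_on {l..r} (h i)" "concave_on {l..r} h0"
    and "\<And>x. x \<in> {l..r} \<Longrightarrow> ((\<lambda>i. h i x) \<longlongrightarrow> h0 x) F"
  shows "ereal (lpt m l' r' h0) \<le> Liminf F (\<lambda>i. ereal (lpt m l' r' (h i)))"
  using eventually_le_lpt[OF assms] by (rule Liminf_ereal_ge)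

lemma Limsup_rpt_le:
  fixes h :: "'i \<Rightarrow> real \<Rightarrow> real"
  assumes "l < l'" "l' \<le> r'" "r' < r"
    and conc: "\<And>i. concave_on {l..r} (h i)" and conc0: "concave_on {l..r} h0"
    and lim: "\<And>x. x \<in> {l..r} \<Longrightarrow> ((\<lambda>i. h i x) \<longlongrightarrow> h0 x) F"
  shows "Limsup F (\<lambda>i. ereal (rpt m l' r' (h i))) \<le> ereal (rpt m l' r' h0)"
proof -
  have lpt_reflect: "ereal (lpt (- m) (- r') (- l') (\<lambda>y. h0 (- y)))
      \<le> Liminf F (\<lambda>i. ereal (lpt (- m) (- r') (- l') (\<lambda>y. h i (- y))))"
    using assms(1-3) concave_on_reflect[OF conc] concave_on_reflect[OF conc0] lim
    by (intro Liminf_lpt_ge[of "- r"]) auto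
  have "Limsup F (\<lambda>i. ereal (rpt m l' r' (h i)))
      = Limsup F (\<lambda>i. - ereal (lpt (- m) (- r') (- l') (\<lambda>y. h i (- y))))"
    using rpt_eq_minus_lpt_reflect[OF conc] assms(1,3) by simp
  also have "\<dots> = - Liminf F (\<lambda>i. ereal (lpt (- m) (- r') (- l') (\<lambda>y. h i (- y))))"
    by (rule ereal_Limsup_uminus)
  also have "\<dots> \<le> - ereal (lpt (- m) (- r') (- l') (\<lambda>y. h0 (- y)))"
    using lpt_reflect by (simp only: ereal_minus_le_minus)
  also have "\<dots> = ereal (rpt m l' r' h0)"
    using rpt_eq_minus_lpt_reflect[OF conc0] assms(1,3) by simp
  finally show ?thesis .
qed

theorem mainTheorem19:
  fixes m l r l' r' :: real
    and h :: "nat \<Rightarrow> real \<Rightarrow> real" and h0 :: "real \<Rightarrow> real"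
  assumes "l < l'" and "l' \<le> r'" and "r' < r"
    and "\<And>i. continuous_on {l..r} (h i)"
    and "\<And>i. concave_on {l..r} (h i)"
    and "continuous_on {l..r} h0" and "concave_on {l..r} h0"
    and "uniform_limit {l..r} h h0 sequentially"
  shows "liminf (\<lambda>i. ereal (lpt m l' r' (h i))) \<ge> ereal (lpt m l' r' h0) \<and>
         limsup (\<lambda>i. ereal (rpt m l' r' (h i))) \<le> ereal (rpt m l' r' h0)"
proof -
  have pointwise: "\<And>x. x \<in> {l..r} \<Longrightarrow> (\<lambda>i. h i x) \<longlonglongrightarrow> h0 x"
    using tendsto_uniform_limitI[OF assms(8)] .
  show ?thesis
    using Liminf_lpt_ge[OF assms(1-3,5,7) pointwise] Limsup_rpt_le[OF assms(1-3,5,7) pointwise]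
    by (rule conjI)
qed

end
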